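(* Let $V$ be a non-empty finite linearly ordered set, and let $\mathscr{X}$ be a system of non-empty subsets of $V$ such that $\max X<\max V$ for every $X\in\mathscr{X}$. Then the number of subsets of $V$ of even cardinality that do not include any $X\in\mathscr{X}$ as a subset equals the number of subsets of $V$ of odd cardinality that do not include any $X\in\mathscr{X}$ as a subset. *)

theory Defs
  imports Main
begin

end

theory Submission
  imports Defs
begin

text \<open>Adding or removing the element \<open>Max V\<close>, which lies in no member of the system,
  is an involution on the subsets of \<open>V\<close> that include no member of the system, and it
  changes the parity of the cardinality.\<close>

definition toggle :: "'a \<Rightarrow> 'a set \<Rightarrow> 'a set" where
  "toggle m S = (if m \<in> S then S - {m} else insert m S)"

lemma toggle_toggle [simp]: "toggle m (toggle m S) = S"
  unfolding toggle_def by auto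

lemma subset_toggle_iff: "m \<notin> X \<Longrightarrow> X \<subseteq> toggle m S \<longleftrightarrow> X \<subseteq> S"
  unfolding toggle_def by auto

lemma toggle_subset_iff: "m \<in> V \<Longrightarrow> toggle m S \<subseteq> V \<longleftrightarrow> S \<subseteq> V"
  unfolding toggle_def by auto

lemma even_card_toggle_iff:
  assumes "finite S"
  shows "even (card (toggle m S)) \<longleftrightarrow> odd (card S)"
proof (cases "m \<in> S")
  case True
  then have "card S = Suc (card (S - {m}))"
    using assms by (metis card_Suc_Diff1)
  then show ?thesis using True unfolding toggle_def by simp
next
  case False
  then show ?thesis using assms unfolding toggle_def by simp
qed

lemma toggle_maps_avoiding_subsets:
  assumes "finite V" "m \<in> V" "\<forall>X\<in>\<X>. m \<notin> X"
  shows "toggle m ` {S. S \<subseteq> V \<and> even (card S) = e \<and> (\<forall>X\<in>\<X>. \<not> X \<subseteq> S)}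
       \<subseteq> {S. S \<subseteq> V \<and> even (card S) = (\<not> e) \<and> (\<forall>X\<in>\<X>. \<not> X \<subseteq> S)}"
proof (rule image_subsetI, clarify)
  fix S assume S: "S \<subseteq> V" "\<forall>X\<in>\<X>. \<not> X \<subseteq> S"
  have "finite S" using S(1) assms(1) by (rule finite_subset)
  then show "toggle m S \<subseteq> V \<and> even (card (toggle m S)) = (\<not> even (card S))
      \<and> (\<forall>X\<in>\<X>. \<not> X \<subseteq> toggle m S)"
    using S assms(2,3) by (simp add: toggle_subset_iff subset_toggle_iff even_card_toggle_iff)
qed

theorem card_even_avoiding_subsets_eq_odd:
  assumes "finite V" "m \<in> V" "\<forall>X\<in>\<X>. m \<notin> X"
  shows "card {S. S \<subseteq> V \<and> even (card S) \<and> (\<forall>X\<in>\<X>. \<not> X \<subseteq> S)}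
       = card {S. S \<subseteq> V \<and> odd (card S) \<and> (\<forall>X\<in>\<X>. \<not> X \<subseteq> S)}"
proof (rule bij_betw_same_card, rule bij_betw_byWitness)
  show "toggle m ` {S. S \<subseteq> V \<and> even (card S) \<and> (\<forall>X\<in>\<X>. \<not> X \<subseteq> S)}
      \<subseteq> {S. S \<subseteq> V \<and> odd (card S) \<and> (\<forall>X\<in>\<X>. \<not> X \<subseteq> S)}"
    using toggle_maps_avoiding_subsets[OF assms, of True] by simp
  show "toggle m ` {S. S \<subseteq> V \<and> odd (card S) \<and> (\<forall>X\<in>\<X>. \<not> X \<subseteq> S)}
      \<subseteq> {S. S \<subseteq> V \<and> even (card S) \<and> (\<forall>X\<in>\<X>. \<not> X \<subseteq> S)}"
    using toggle_maps_avoiding_subsets[OF assms, of False] by simp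
qed simp_all

theorem lemma2:
  fixes V :: "'a::linorder set" and \<X> :: "'a set set"
  assumes "finite V" and "V \<noteq> {}"
    and "\<forall>X\<in>\<X>. X \<subseteq> V \<and> X \<noteq> {} \<and> Max X < Max V"
  shows "card {S. S \<subseteq> V \<and> even (card S) \<and> (\<forall>X\<in>\<X>. \<not> X \<subseteq> S)}
       = card {S. S \<subseteq> V \<and> odd (card S) \<and> (\<forall>X\<in>\<X>. \<not> X \<subseteq> S)}"
proof (rule card_even_avoiding_subsets_eq_odd)
  show "finite V" "Max V \<in> V" using assms(1,2) by simp_all
  show "\<forall>X\<in>\<X>. Max V \<notin> X"
  proof (intro ballI notI)
    fix X assume "X \<in> \<X>" "Max V \<in> X"
    moreover have "finite X" using \<open>X \<in> \<X>\<close> assms(1,3) finite_subset by blast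
    ultimately show False using assms(3) by (meson Max_ge leD)
  qed
qed

end
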